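(* Let $n\ge 1$, $k\ge1$, and $k=k_1+k_2$ with $k_1,k_2\ge 0$. Let $E$ be the set of all triples $(u,w,c)$ with $u\neq w$ in $[n]$ and $c\in[k]$, and let $\mathcal I$ be either (i) the set of all $(k_1,k_2)$-decreasing $k$-colored rooted forests on $[n]$, or (ii) the set of all $(k_1,k_2)$-non-increasing $k$-colored rooted forests on $[n]$. Then $(E,\mathcal I)$ is an $(n-1)$-covering system whose bases are the $k$-colored rooted trees in $\mathcal I$, and the map $\texttt{a}$ defined on each such tree $T$ by $$\texttt{a}(T)=\{(n,i,1)\in T:\ i\in[n]\}$$ (the set of edges of $T$ whose parent is $n$ and whose color is $1$) is an activity of $(E,\mathcal I)$.
   Context: For finite sets $X\subseteq Y$, write $[X,Y]=\{Z: X\subseteq Z\subseteq Y\}$. An $r$-covering system is a pair $(E,\mathcal I)$ where $E$ is a finite set and $\mathcal I$ is a collection of subsets of $E$, each of cardinality at most $r$, such that for every $I\in\mathcal I$ there exists $B\in\mathcal I$ with $|B|=r$ and $[I,B]\subseteq\mathcal I$; members of cardinality $r$ are bases. An activity is a function $\texttt{a}$ on the set $\mathcal B$ of bases with $\texttt{a}(B)\subseteq B$, $[B\setminus\texttt{a}(B),B]\subseteq\mathcal I$ for all $B$, and such that every $I\in\mathcal I$ lies in $[B\setminus\texttt{a}(B),B]$ for exactly one $B\in\mathcal B$. A $k$-colored rooted forest on $[n]$ is a set $F$ of triples $(u,w,c)$ ($u\ne w\in[n]$, $c\in[k]$; read as an edge from parent $u$ to child $w$ with color $c$) such that every vertex is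 the child in at most one triple and the underlying graph has no cycle; vertices that are not children are the roots (one per component). It is a tree if it has $n-1$ edges. For a vertex $v$ having at least one child, let $c_v$ be the minimum color of the edges from $v$ to its children. Given $k=k_1+k_2$, the forest is $(k_1,k_2)$-decreasing if for every vertex $v$ having a child and with $c_v\le k_1$, every child $w$ of $v$ joined to $v$ by an edge of color $c_v$ satisfies $w<v$. It is $(k_1,k_2)$-non-increasing if for every vertex $v$ having a child and with $c_v\le k_1$, at least one child $w$ of $v$ joined to $v$ by an edge of color $c_v$ satisfies $w<v$. (Colors in $[k_1+1,k]$ are "free": they are never checked.) *)

theory Defs
  imports Main
begin

definition set_interval :: "'a set \<Rightarrow> 'a set \<Rightarrow> 'a set set" where
  "set_interval X Y = {Z. X \<subseteq> Z \<and> Z \<subseteq> Y}"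

definition covering_system :: "nat \<Rightarrow> 'a set \<Rightarrow> 'a set set \<Rightarrow> bool" where
  "covering_system r E \<I> \<longleftrightarrow> finite E \<and> (\<forall>I\<in>\<I>. I \<subseteq> E \<and> card I \<le> r) \<and>
     (\<forall>I\<in>\<I>. \<exists>B\<in>\<I>. card B = r \<and> set_interval I B \<subseteq> \<I>)"

definition bases :: "nat \<Rightarrow> 'a set set \<Rightarrow> 'a set set" where
  "bases r \<I> = {B\<in>\<I>. card B = r}"

text \<open>An activity (only its values on bases matter).\<close>
definition activity :: "nat \<Rightarrow> 'a set set \<Rightarrow> ('a set \<Rightarrow> 'a set) \<Rightarrow> bool" where
  "activity r \<I> a \<longleftrightarrow>
     (\<forall>B\<in>bases r \<I>. a B \<subseteq> B \<and> set_interval (B - a B) B \<subseteq> \<I>) \<and>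
     (\<forall>I\<in>\<I>. \<exists>!B. B \<in> bases r \<I> \<and> I \<in> set_interval (B - a B) B)"

definition ground :: "nat \<Rightarrow> nat \<Rightarrow> (nat \<times> nat \<times> nat) set" where
  "ground n k = {(u,w,c). u \<in> {1..n} \<and> w \<in> {1..n} \<and> u \<noteq> w \<and> c \<in> {1..k}}"

definition parent_rel :: "(nat \<times> nat \<times> nat) set \<Rightarrow> (nat \<times> nat) set" where
  "parent_rel F = {(u,w). \<exists>c. (u,w,c) \<in> F}"

text \<open>Since every vertex has at most one parent, a cycle of the underlying (multi)graph is
  necessarily a directed cycle, so acyclicity is expressed via the parent relation.\<close>
definition colored_forest :: "nat \<Rightarrow> nat \<Rightarrow> (nat \<times> nat \<times> nat) set \<Rightarrow> bool" where
  "colored_forest n k F \<longleftrightarrow> F \<subseteq> ground n k \<and>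
     (\<forall>u w c u' c'. (u,w,c) \<in> F \<longrightarrow> (u',w,c') \<in> F \<longrightarrow> u = u' \<and> c = c') \<and>
     acyclic (parent_rel F)"

definition colored_tree :: "nat \<Rightarrow> nat \<Rightarrow> (nat \<times> nat \<times> nat) set \<Rightarrow> bool" where
  "colored_tree n k F \<longleftrightarrow> colored_forest n k F \<and> card F = n - 1"

definition min_child_color :: "(nat \<times> nat \<times> nat) set \<Rightarrow> nat \<Rightarrow> nat" where
  "min_child_color F v = Min {c. \<exists>w. (v,w,c) \<in> F}"

definition has_child :: "(nat \<times> nat \<times> nat) set \<Rightarrow> nat \<Rightarrow> bool" where
  "has_child F v \<longleftrightarrow> (\<exists>w c. (v,w,c) \<in> F)"

definition decreasing :: "nat \<Rightarrow> (nat \<times> nat \<times> nat) set \<Rightarrow> bool" where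
  "decreasing k1 F \<longleftrightarrow> (\<forall>v. has_child F v \<longrightarrow> min_child_color F v \<le> k1 \<longrightarrow>
      (\<forall>w. (v,w,min_child_color F v) \<in> F \<longrightarrow> w < v))"

definition non_increasing :: "nat \<Rightarrow> (nat \<times> nat \<times> nat) set \<Rightarrow> bool" where
  "non_increasing k1 F \<longleftrightarrow> (\<forall>v. has_child F v \<longrightarrow> min_child_color F v \<le> k1 \<longrightarrow>
      (\<exists>w. (v,w,min_child_color F v) \<in> F \<and> w < v))"

definition decreasing_forests :: "nat \<Rightarrow> nat \<Rightarrow> nat \<Rightarrow> (nat \<times> nat \<times> nat) set set" where
  "decreasing_forests n k1 k2 = {F. colored_forest n (k1+k2) F \<and> decreasing k1 F}"

definition non_increasing_forests :: "nat \<Rightarrow> nat \<Rightarrow> nat \<Rightarrow> (nat \<times> nat \<times> nat) set set" where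
  "non_increasing_forests n k1 k2 = {F. colored_forest n (k1+k2) F \<and> non_increasing k1 F}"

definition act :: "nat \<Rightarrow> (nat \<times> nat \<times> nat) set \<Rightarrow> (nat \<times> nat \<times> nat) set" where
  "act n T = {e \<in> T. \<exists>i\<in>{1..n}. e = (n,i,1)}"

end

theory Submission
  imports Defs
begin

text \<open>Given a forest \<open>F\<close>, let \<open>R\<close> be the root of the tree containing \<open>n\<close>. Hanging every other
  root below \<open>n\<close> by an edge of colour 1 yields a tree \<open>B\<close> with \<open>B - a(B) \<subseteq> F \<subseteq> B\<close>, and it is the
  only such tree: an active edge \<open>(n,i,1)\<close> of a tree containing \<open>F\<close> must end in a root
  \<open>i \<noteq> R\<close> of \<open>F\<close>, and counting edges forces equality. Both the decreasing and the non-increasing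
  condition only look at the edges leaving a vertex \<open>v \<noteq> n\<close> (at \<open>n\<close> every child is smaller), so
  they are preserved when the edges leaving \<open>n\<close> are changed; this gives the covering and
  activity properties.\<close>

lemma finite_ground: "finite (ground n k)"
proof -
  have "ground n k \<subseteq> {1..n} \<times> {1..n} \<times> {1..k}" by (auto simp: ground_def)
  thus ?thesis by (rule finite_subset) auto
qed

lemma parent_rel_mono: "Z \<subseteq> F \<Longrightarrow> parent_rel Z \<subseteq> parent_rel F"
  by (auto simp: parent_rel_def)

lemma colored_forest_subset: "colored_forest n k F \<Longrightarrow> Z \<subseteq> F \<Longrightarrow> colored_forest n k Z"
  unfolding colored_forest_def using acyclic_subset parent_rel_mono by blast

lemma finite_colored_forest: "colored_forest n k F \<Longrightarrow> finite F"
  using finite_ground finite_subset unfolding colored_forest_def by blast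

lemma card_colored_forest:
  assumes "colored_forest n k F"
  shows "card F = card {w. \<exists>u c. (u,w,c) \<in> F}"
proof -
  have "inj_on (\<lambda>(u,w,c). w) F"
    using assms unfolding colored_forest_def inj_on_def by fastforce
  moreover have "{w. \<exists>u c. (u,w,c) \<in> F} = (\<lambda>(u,w,c). w) ` F" by force
  ultimately show ?thesis by (simp add: card_image)
qed

lemma parent_rel_single_parent:
  "colored_forest n k F \<Longrightarrow> (u,w) \<in> parent_rel F \<Longrightarrow> (u',w) \<in> parent_rel F \<Longrightarrow> u = u'"
  unfolding parent_rel_def colored_forest_def by blast

lemma parent_rel_subset: "colored_forest n k F \<Longrightarrow> parent_rel F \<subseteq> {1..n} \<times> {1..n}"
  by (auto simp: parent_rel_def colored_forest_def ground_def)

lemma wf_parent_rel: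
  assumes "colored_forest n k F"
  shows "wf (parent_rel F)"
proof (rule finite_acyclic_wf)
  show "finite (parent_rel F)"
    using parent_rel_subset[OF assms] by (rule finite_subset) auto
  show "acyclic (parent_rel F)" using assms by (simp add: colored_forest_def)
qed

lemma rtrancl_single_parent_comparable:
  assumes single: "\<And>u u' w. (u,w) \<in> r \<Longrightarrow> (u',w) \<in> r \<Longrightarrow> u = u'"
    and "(a,x) \<in> r\<^sup>*" and "(b,x) \<in> r\<^sup>*"
  shows "(a,b) \<in> r\<^sup>* \<or> (b,a) \<in> r\<^sup>*"
  using assms(2,3)
proof (induction arbitrary: b rule: rtrancl_induct)
  case base thus ?case by simp
next
  case (step y z)
  show ?case
  proof (cases "b = z")
    case True thus ?thesis using step.hyps by (meson rtrancl.rtrancl_into_rtrancl)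
  next
    case False
    then obtain y' where "(b,y') \<in> r\<^sup>*" "(y',z) \<in> r" using step.prems by (meson rtranclE)
    with single step.hyps(2) have "y' = y" by blast
    thus ?thesis using step.IH \<open>(b,y') \<in> r\<^sup>*\<close> by blast
  qed
qed

text \<open>Looking at the last edge of \<open>S\<close> on a path.\<close>

lemma trancl_Un_edges_from:
  assumes S: "S \<subseteq> {n} \<times> UNIV" and "(x,z) \<in> (r \<union> S)\<^sup>+"
  shows "(x,z) \<in> r\<^sup>+ \<or> (\<exists>v. (n,v) \<in> S \<and> (v,z) \<in> r\<^sup>* \<and> (x,n) \<in> (r \<union> S)\<^sup>*)"
  using assms(2)
proof (induction rule: trancl_induct)
  case (base y)
  then show ?case using S by auto
next
  case (step y z)
  from step.hyps(2) consider "(y,z) \<in> r" | "(y,z) \<in> S" by blast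
  then show ?case
  proof cases
    case 1
    with step.IH show ?thesis by (meson rtrancl.rtrancl_into_rtrancl trancl.trancl_into_trancl)
  next
    case 2
    with S have "y = n" by blast
    with 2 step.hyps(1) show ?thesis by auto
  qed
qed

lemma acyclic_Un_edges_from:
  assumes "acyclic r" and S: "S \<subseteq> {n} \<times> UNIV" and no_ancestor: "\<And>v. (n,v) \<in> S \<Longrightarrow> (v,n) \<notin> r\<^sup>*"
  shows "acyclic (r \<union> S)"
  unfolding acyclic_def
proof (intro allI notI)
  fix x assume "(x,x) \<in> (r \<union> S)\<^sup>+"
  with trancl_Un_edges_from[OF S] \<open>acyclic r\<close>
  obtain v where v: "(n,v) \<in> S" "(v,x) \<in> r\<^sup>*" "(x,n) \<in> (r \<union> S)\<^sup>*"
    unfolding acyclic_def by blast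
  have "(v,x) \<in> (r \<union> S)\<^sup>*" using v(2) rtrancl_mono[of r "r \<union> S"] by blast
  with v(1,3) have "(n,n) \<in> (r \<union> S)\<^sup>+"
    by (meson UnI2 rtrancl_into_trancl2 trancl_rtrancl_trancl)
  with trancl_Un_edges_from[OF S] \<open>acyclic r\<close> no_ancestor show False
    unfolding acyclic_def by blast
qed

definition root_of :: "(nat \<times> nat \<times> nat) set \<Rightarrow> nat \<Rightarrow> nat" where
  "root_of F x = (SOME R. (R,x) \<in> (parent_rel F)\<^sup>* \<and> (\<forall>u. (u,R) \<notin> parent_rel F))"

lemma root_of:
  assumes "colored_forest n k F"
  shows "(root_of F x, x) \<in> (parent_rel F)\<^sup>*" and "(u, root_of F x) \<notin> parent_rel F"
proof -
  have "x \<in> {y. (y,x) \<in> (parent_rel F)\<^sup>*}" by simp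
  then obtain R where R: "R \<in> {y. (y,x) \<in> (parent_rel F)\<^sup>*}"
    and min: "\<And>y. (y,R) \<in> parent_rel F \<Longrightarrow> y \<notin> {y. (y,x) \<in> (parent_rel F)\<^sup>*}"
    by (rule wfE_min[OF wf_parent_rel[OF assms]]) blast
  have no_parent: "(u,R) \<notin> parent_rel F" for u
  proof
    assume "(u,R) \<in> parent_rel F"
    with R have "(u,x) \<in> (parent_rel F)\<^sup>*" by (simp add: converse_rtrancl_into_rtrancl)
    with min[OF \<open>(u,R) \<in> parent_rel F\<close>] show False by simp
  qed
  with R have "(R,x) \<in> (parent_rel F)\<^sup>* \<and> (\<forall>u. (u,R) \<notin> parent_rel F)" by simp
  then have "(root_of F x, x) \<in> (parent_rel F)\<^sup>* \<and> (\<forall>u. (u, root_of F x) \<notin> parent_rel F)"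
    unfolding root_of_def by (rule someI)
  then show "(root_of F x, x) \<in> (parent_rel F)\<^sup>*" and "(u, root_of F x) \<notin> parent_rel F"
    by auto
qed

lemma root_of_unique:
  assumes F: "colored_forest n k F"
    and v: "\<And>u. (u,v) \<notin> parent_rel F" and "(v,x) \<in> (parent_rel F)\<^sup>*"
  shows "v = root_of F x"
proof -
  have "(v, root_of F x) \<in> (parent_rel F)\<^sup>* \<or> (root_of F x, v) \<in> (parent_rel F)\<^sup>*"
    by (rule rtrancl_single_parent_comparable[OF parent_rel_single_parent[OF F]
          \<open>(v,x) \<in> (parent_rel F)\<^sup>*\<close> root_of(1)[OF F]])
  then show ?thesis
  proof
    assume "(v, root_of F x) \<in> (parent_rel F)\<^sup>*"
    then show ?thesis by (cases rule: rtranclE) (use root_of(2)[OF F] in auto)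
  next
    assume "(root_of F x, v) \<in> (parent_rel F)\<^sup>*"
    then show ?thesis by (cases rule: rtranclE) (use v in auto)
  qed
qed

lemma root_of_range:
  assumes F: "colored_forest n k F" and "x \<in> {1..n}"
  shows "root_of F x \<in> {1..n}"
  using root_of(1)[OF F, of x]
proof (cases rule: converse_rtranclE)
  case base thus ?thesis using \<open>x \<in> {1..n}\<close> by simp
next
  case (step y) thus ?thesis using parent_rel_subset[OF F] by auto
qed

subsection \<open>Grafting the other roots below \<open>n\<close>\<close>

definition other_roots :: "nat \<Rightarrow> (nat \<times> nat \<times> nat) set \<Rightarrow> nat set" where
  "other_roots n F = {v \<in> {1..n}. (\<forall>u. (u,v) \<notin> parent_rel F) \<and> v \<noteq> root_of F n}"

definition graft_roots :: "nat \<Rightarrow> (nat \<times> nat \<times> nat) set \<Rightarrow> (nat \<times> nat \<times> nat) set" where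
  "graft_roots n F = F \<union> {(n,v,1) | v. v \<in> other_roots n F}"

lemma parent_rel_graft_roots:
  "parent_rel (graft_roots n F) = parent_rel F \<union> {n} \<times> other_roots n F"
  by (auto simp: graft_roots_def parent_rel_def)

lemma colored_forest_graft_roots:
  assumes "n \<ge> 1" "k \<ge> 1" and F: "colored_forest n k F"
  shows "colored_forest n k (graft_roots n F)"
proof -
  have "n \<notin> other_roots n F"
    using root_of_unique[OF F, of n n] by (auto simp: other_roots_def)
  then have "graft_roots n F \<subseteq> ground n k"
    using F assms(1,2) by (auto simp: graft_roots_def colored_forest_def ground_def other_roots_def)
  moreover have "\<forall>u w c u' c'. (u,w,c) \<in> graft_roots n F \<longrightarrow> (u',w,c') \<in> graft_roots n F
      \<longrightarrow> u = u' \<and> c = c'"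
    using F unfolding graft_roots_def other_roots_def colored_forest_def parent_rel_def by blast
  moreover have "acyclic (parent_rel F \<union> {n} \<times> other_roots n F)"
  proof (rule acyclic_Un_edges_from)
    show "acyclic (parent_rel F)" using F by (simp add: colored_forest_def)
    show "(v,n) \<notin> (parent_rel F)\<^sup>*" if "(n,v) \<in> {n} \<times> other_roots n F" for v
      using that root_of_unique[OF F, of v n] by (auto simp: other_roots_def)
  qed auto
  ultimately show ?thesis by (simp add: colored_forest_def parent_rel_graft_roots)
qed

lemma children_graft_roots:
  assumes "n \<ge> 1" "k \<ge> 1" and F: "colored_forest n k F"
  shows "{w. \<exists>u c. (u,w,c) \<in> graft_roots n F} = {1..n} - {root_of F n}"
proof (intro equalityI subsetI)
  fix w assume "w \<in> {w. \<exists>u c. (u,w,c) \<in> graft_roots n F}"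
  then obtain u c where e: "(u,w,c) \<in> graft_roots n F" by blast
  then have "w \<in> {1..n}"
    using colored_forest_graft_roots[OF assms] by (auto simp: colored_forest_def ground_def)
  moreover have "w \<noteq> root_of F n"
    using e root_of(2)[OF F] by (auto simp: graft_roots_def other_roots_def parent_rel_def)
  ultimately show "w \<in> {1..n} - {root_of F n}" by simp
next
  fix w assume w: "w \<in> {1..n} - {root_of F n}"
  show "w \<in> {w. \<exists>u c. (u,w,c) \<in> graft_roots n F}"
  proof (cases "\<exists>u. (u,w) \<in> parent_rel F")
    case True
    then show ?thesis by (auto simp: parent_rel_def graft_roots_def)
  next
    case False
    with w have "w \<in> other_roots n F" by (simp add: other_roots_def)
    then show ?thesis by (auto simp: graft_roots_def)
  qed
qed

lemma card_graft_roots: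
  assumes "n \<ge> 1" "k \<ge> 1" and F: "colored_forest n k F"
  shows "card (graft_roots n F) = n - 1"
  using card_colored_forest[OF colored_forest_graft_roots[OF assms]]
    children_graft_roots[OF assms] root_of_range[OF F, of n] \<open>n \<ge> 1\<close> by simp

lemma graft_roots_minus_act: "graft_roots n F - act n (graft_roots n F) \<subseteq> F"
  by (auto simp: graft_roots_def act_def other_roots_def)

lemma graft_roots_unique:
  assumes "n \<ge> 1" "k \<ge> 1" and F: "colored_forest n k F"
    and B: "colored_forest n k B" "card B = n - 1" "F \<subseteq> B" "B - act n B \<subseteq> F"
  shows "B = graft_roots n F"
proof -
  have "x \<in> graft_roots n F" if "x \<in> B" "x \<notin> F" for x
  proof -
    from that B(4) obtain i where x: "x = (n,i,1)" "i \<in> {1..n}" by (auto simp: act_def)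
    have no_parent: "(u,i) \<notin> parent_rel F" for u
    proof
      assume "(u,i) \<in> parent_rel F"
      then obtain c where "(u,i,c) \<in> F" by (auto simp: parent_rel_def)
      with B(1,3) \<open>x \<in> B\<close> x have "(u,i,c) = x" unfolding colored_forest_def by blast
      with \<open>(u,i,c) \<in> F\<close> \<open>x \<notin> F\<close> show False by simp
    qed
    have "i \<noteq> root_of F n"
    proof
      assume "i = root_of F n"
      then have "(i,n) \<in> (parent_rel B)\<^sup>*"
        using root_of(1)[OF F] rtrancl_mono[OF parent_rel_mono[OF B(3)]] by blast
      moreover have "(n,i) \<in> parent_rel B" using \<open>x \<in> B\<close> x by (auto simp: parent_rel_def)
      ultimately have "(n,n) \<in> (parent_rel B)\<^sup>+" by (meson rtrancl_into_trancl2)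
      with B(1) show False unfolding colored_forest_def acyclic_def by blast
    qed
    with x no_parent show ?thesis by (auto simp: graft_roots_def other_roots_def)
  qed
  then have "B \<subseteq> graft_roots n F" by (auto simp: graft_roots_def)
  then show ?thesis
    using card_subset_eq finite_colored_forest colored_forest_graft_roots card_graft_roots assms
    by metis
qed

subsection \<open>Forest properties insensitive to the edges leaving \<open>n\<close>\<close>

definition agree_off :: "nat \<Rightarrow> (nat \<times> nat \<times> nat) set \<Rightarrow> (nat \<times> nat \<times> nat) set \<Rightarrow> bool" where
  "agree_off n F Z \<longleftrightarrow> (\<forall>v w c. v \<noteq> n \<longrightarrow> ((v,w,c) \<in> Z \<longleftrightarrow> (v,w,c) \<in> F))"

lemma agree_off_graft_roots: "agree_off n F (graft_roots n F)"
  by (auto simp: agree_off_def graft_roots_def)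

lemma agree_off_interval: "Z \<in> set_interval (B - act n B) B \<Longrightarrow> agree_off n B Z"
  by (auto simp: agree_off_def set_interval_def act_def)

lemma covering_system_activity_of_forests:
  assumes "n \<ge> 1" "k \<ge> 1"
    and \<I>: "\<I> = {F. colored_forest n k F \<and> P F}"
    and P_agree_off: "\<And>F Z. P F \<Longrightarrow> colored_forest n k Z \<Longrightarrow> agree_off n F Z \<Longrightarrow> P Z"
  shows "covering_system (n - 1) (ground n k) \<I> \<and> bases (n - 1) \<I> = {T \<in> \<I>. colored_tree n k T}
    \<and> activity (n - 1) \<I> (act n)"
proof -
  have bases: "bases (n - 1) \<I> = {T \<in> \<I>. colored_tree n k T}"
    using \<I> by (auto simp: bases_def colored_tree_def)
  have interval: "set_interval (B - act n B) B \<subseteq> \<I>" if "B \<in> bases (n - 1) \<I>" for B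
  proof
    fix Z assume Z: "Z \<in> set_interval (B - act n B) B"
    have B: "colored_forest n k B" "P B" using that \<I> by (auto simp: bases_def)
    have "colored_forest n k Z"
      using colored_forest_subset[OF B(1)] Z by (auto simp: set_interval_def)
    with P_agree_off[OF B(2) this agree_off_interval[OF Z]] \<I> show "Z \<in> \<I>" by simp
  qed
  have graft_interval: "I \<in> set_interval (graft_roots n I - act n (graft_roots n I)) (graft_roots n I)"
    for I
    using graft_roots_minus_act[of n I] by (auto simp: set_interval_def graft_roots_def)
  have graft_base: "graft_roots n I \<in> bases (n - 1) \<I>" if "I \<in> \<I>" for I
  proof -
    have I: "colored_forest n k I" "P I" using that \<I> by auto
    have "colored_forest n k (graft_roots n I)" by (rule colored_forest_graft_roots[OF assms(1,2) I(1)])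
    moreover note P_agree_off[OF I(2) this agree_off_graft_roots]
    ultimately show ?thesis using card_graft_roots[OF assms(1,2) I(1)] \<I> by (simp add: bases_def)
  qed
  have unique: "B = graft_roots n I"
    if "I \<in> \<I>" "B \<in> bases (n - 1) \<I>" "I \<in> set_interval (B - act n B) B" for I B
  proof (rule graft_roots_unique[OF assms(1,2)])
    show "colored_forest n k I" "colored_forest n k B" "card B = n - 1"
      using that(1,2) \<I> by (auto simp: bases_def)
    show "I \<subseteq> B" "B - act n B \<subseteq> I" using that(3) by (auto simp: set_interval_def)
  qed
  have "covering_system (n - 1) (ground n k) \<I>"
    unfolding covering_system_def
  proof (intro conjI ballI finite_ground)
    fix I assume I: "I \<in> \<I>"
    then show "I \<subseteq> ground n k" using \<I> by (simp add: colored_forest_def)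
    have "card I \<le> card (graft_roots n I)"
      using graft_interval finite_colored_forest graft_base[OF I] \<I>
      by (intro card_mono) (auto simp: bases_def set_interval_def)
    then show "card I \<le> n - 1" using graft_base[OF I] by (simp add: bases_def)
    have "set_interval I (graft_roots n I) \<subseteq> \<I>"
      using interval[OF graft_base[OF I]] graft_interval[of I] by (auto simp: set_interval_def)
    then show "\<exists>B\<in>\<I>. card B = n - 1 \<and> set_interval I B \<subseteq> \<I>"
      using graft_base[OF I] by (auto simp: bases_def)
  qed
  moreover have "activity (n - 1) \<I> (act n)"
    unfolding activity_def
  proof (intro conjI ballI)
    fix B assume "B \<in> bases (n - 1) \<I>"
    then show "act n B \<subseteq> B" "set_interval (B - act n B) B \<subseteq> \<I>"
      using interval by (auto simp: act_def)
  next
    fix I assume "I \<in> \<I>"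
    then show "\<exists>!B. B \<in> bases (n - 1) \<I> \<and> I \<in> set_interval (B - act n B) B"
      using graft_base graft_interval unique by blast
  qed
  ultimately show ?thesis using bases by blast
qed

lemma child_colors_agree_off:
  "agree_off n F Z \<Longrightarrow> v \<noteq> n \<Longrightarrow> {c. \<exists>w. (v,w,c) \<in> Z} = {c. \<exists>w. (v,w,c) \<in> F}"
  by (auto simp: agree_off_def)

lemma min_child_color_mem:
  assumes "colored_forest n k F" "has_child F v"
  obtains w where "(v, w, min_child_color F v) \<in> F"
proof -
  have "{c. \<exists>w. (v,w,c) \<in> F} \<subseteq> {1..k}"
    using assms(1) by (auto simp: colored_forest_def ground_def)
  then have "finite {c. \<exists>w. (v,w,c) \<in> F}" using finite_subset by blast
  moreover have "{c. \<exists>w. (v,w,c) \<in> F} \<noteq> {}" using assms(2) by (auto simp: has_child_def)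
  ultimately show ?thesis using that Min_in unfolding min_child_color_def by blast
qed

lemma child_of_top_less: "colored_forest n k F \<Longrightarrow> (n,w,c) \<in> F \<Longrightarrow> w < n"
  by (auto simp: colored_forest_def ground_def)

lemma decreasing_agree_off:
  assumes F: "decreasing k1 F" and Z: "colored_forest n k Z" and agree: "agree_off n F Z"
  shows "decreasing k1 Z"
  unfolding decreasing_def
proof (intro allI impI)
  fix v w assume v: "has_child Z v" "min_child_color Z v \<le> k1" "(v,w,min_child_color Z v) \<in> Z"
  show "w < v"
  proof (cases "v = n")
    case True thus ?thesis using v(3) child_of_top_less[OF Z] by blast
  next
    case False
    with agree v F child_colors_agree_off[OF agree False] show ?thesis
      by (auto simp: decreasing_def has_child_def min_child_color_def agree_off_def)
  qed
qed

lemma non_increasing_agree_off: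
  assumes F: "non_increasing k1 F" and Z: "colored_forest n k Z" and agree: "agree_off n F Z"
  shows "non_increasing k1 Z"
  unfolding non_increasing_def
proof (intro allI impI)
  fix v assume v: "has_child Z v" "min_child_color Z v \<le> k1"
  show "\<exists>w. (v,w,min_child_color Z v) \<in> Z \<and> w < v"
  proof (cases "v = n")
    case True
    with min_child_color_mem[OF Z v(1)] child_of_top_less[OF Z] show ?thesis by metis
  next
    case False
    with agree v F child_colors_agree_off[OF agree False] show ?thesis
      by (auto simp: non_increasing_def has_child_def min_child_color_def agree_off_def)
  qed
qed

theorem proposition4p2:
  fixes n k k1 k2 :: nat and \<I> :: "(nat \<times> nat \<times> nat) set set"
  assumes "n \<ge> 1" and "k \<ge> 1" and "k = k1 + k2"
    and "\<I> = decreasing_forests n k1 k2 \<or> \<I> = non_increasing_forests n k1 k2"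
  shows "covering_system (n - 1) (ground n k) \<I>
    \<and> bases (n - 1) \<I> = {T \<in> \<I>. colored_tree n k T}
    \<and> activity (n - 1) \<I> (act n)"
  using assms(4)
proof
  assume "\<I> = decreasing_forests n k1 k2"
  then have "\<I> = {F. colored_forest n k F \<and> decreasing k1 F}"
    using assms(3) by (simp add: decreasing_forests_def)
  with assms(1,2) show ?thesis
    by (rule covering_system_activity_of_forests) (rule decreasing_agree_off)
next
  assume "\<I> = non_increasing_forests n k1 k2"
  then have "\<I> = {F. colored_forest n k F \<and> non_increasing k1 F}"
    using assms(3) by (simp add: non_increasing_forests_def)
  with assms(1,2) show ?thesis
    by (rule covering_system_activity_of_forests) (rule non_increasing_agree_off)
qed

end
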